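(* With $G$ as defined below, $G$ is steep at the relative boundary of $\mathcal{P}_{\rm s}$: for any $p_0\in\partial\mathcal{P}_{\rm s}$, any $p_1\in\mathcal{P}_{\rm s}$, and $p_t=(1-t)p_0+tp_1$, one has \[ \lim_{t\to+0}\frac{d}{dt}G(p_t)=-\infty , \] where for $t\in(0,1)$, $\frac{d}{dt}G(p_t)=\sum_{(x,y)\in\mathcal{E}}(p_1(x,y)-p_0(x,y))\log\frac{p_t(y|x)}{v_0(y|x)}$. In particular there exists $(x,y)\in\mathcal{E}$ with $p_0(x,y)=0$ and $p_t(y|x)\to0$ as $t\to+0$.
   Context: $\mathcal{X}$ is a finite set and $\mathcal{E}\subset\mathcal{X}^2$ is such that the directed graph $(\mathcal{X},\mathcal{E})$ is strongly connected (for every $(x,y)$ there is a directed path from $x$ to $y$). $\mathcal{W}(\mathcal{X},\mathcal{E})$ is the set of Markov kernels $w(y|x)$ on $\mathcal{X}$ ($w\ge0$, $\sum_y w(y|x)=1$) with $\{(x,y)\mid w(y|x)>0\}=\mathcal{E}$; fix $v_0\in\mathcal{W}(\mathcal{X},\mathcal{E})$. $\mathcal{P}_{\rm s}$ is the set of probability distributions $p$ on $\mathcal{X}^2$ that are stationary, i.e. $\sum_y p(x,y)=\sum_y p(y,x)$ for all $x$, and whose support equals $\mathcal{E}$; $\mathrm{cl}(\mathcal{P}_{\rm s})$ is its closure in $\mathbb{R}^{\mathcal{X}^2}$ (stationary distributions with support contained in $\mathcal{E}$) and $\partial\mathcal{P}_{\rm s}=\mathrm{cl}(\mathcal{P}_{\rm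 s})\setminus\mathcal{P}_{\rm s}$ (those whose support is a proper subset of $\mathcal{E}$). For $p\in\mathrm{cl}(\mathcal{P}_{\rm s})$, $\bar p(x)=\sum_y p(x,y)$, $p(y|x)=p(x,y)/\bar p(x)$ when $\bar p(x)>0$, and $G(p)=\sum_{(x,y)\in\mathcal{E}}p(x,y)\log\frac{p(x,y)}{v_0(y|x)}-\sum_{x}\bar p(x)\log\bar p(x)$ with $0\log0=0$. *)

theory Defs
  imports "HOL-Analysis.Analysis"
begin

definition strongly_connected :: "('a \<times> 'a) set \<Rightarrow> bool" where
  "strongly_connected E \<longleftrightarrow> (\<forall>x y. (x, y) \<in> E\<^sup>+)"

text \<open>Markov kernels with support exactly E; w y x stands for w(y|x).\<close>
definition kernels_W :: "('a::finite \<times> 'a) set \<Rightarrow> ('a \<Rightarrow> 'a \<Rightarrow> real) set" where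
  "kernels_W E = {w. (\<forall>x y. w y x \<ge> 0) \<and> (\<forall>x. (\<Sum>y\<in>UNIV. w y x) = 1)
                     \<and> {(x, y). w y x > 0} = E}"

definition cl_Ps :: "('a::finite \<times> 'a) set \<Rightarrow> ('a \<times> 'a \<Rightarrow> real) set" where
  "cl_Ps E = {p. (\<forall>z. p z \<ge> 0) \<and> (\<Sum>z\<in>UNIV. p z) = 1
               \<and> (\<forall>x. (\<Sum>y\<in>UNIV. p (x, y)) = (\<Sum>y\<in>UNIV. p (y, x)))
               \<and> {z. p z > 0} \<subseteq> E}"

definition Ps :: "('a::finite \<times> 'a) set \<Rightarrow> ('a \<times> 'a \<Rightarrow> real) set" where
  "Ps E = {p \<in> cl_Ps E. {z. p z > 0} = E}"

definition bdry_Ps :: "('a::finite \<times> 'a) set \<Rightarrow> ('a \<times> 'a \<Rightarrow> real) set" where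
  "bdry_Ps E = cl_Ps E - Ps E"

definition marg :: "('a::finite \<times> 'a \<Rightarrow> real) \<Rightarrow> 'a \<Rightarrow> real" where
  "marg p x = (\<Sum>y\<in>UNIV. p (x, y))"

text \<open>Conditional p(y|x) = p(x,y)/pbar(x) (only used where pbar(x) > 0).\<close>
definition cond :: "('a::finite \<times> 'a \<Rightarrow> real) \<Rightarrow> 'a \<Rightarrow> 'a \<Rightarrow> real" where
  "cond p y x = p (x, y) / marg p x"

text \<open>x log x with 0 log 0 = 0 (Isabelle's ln 0 = 0 already gives this).\<close>
definition xlogx :: "real \<Rightarrow> real" where
  "xlogx u = (if u = 0 then 0 else u * ln u)"

definition G :: "('a::finite \<times> 'a) set \<Rightarrow> ('a \<Rightarrow> 'a \<Rightarrow> real) \<Rightarrow> ('a \<times> 'a \<Rightarrow> real) \<Rightarrow> real" where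
  "G E v0 p = (\<Sum>(x, y)\<in>E. (if p (x, y) = 0 then 0 else p (x, y) * ln (p (x, y) / v0 y x)))
              - (\<Sum>x\<in>UNIV. xlogx (marg p x))"

end

theory Submission
  imports Defs
begin

text \<open>Since p0 lies on the boundary but is stationary and the graph is strongly connected, some
  edge (x, y) of E carries no p0-mass although its tail x does: otherwise stationarity would
  spread positivity of the marginal along every edge and p0 would have full support. Along that
  edge p_t(y|x) \<sim> t p1(x, y) / marg p0 x \<rightarrow> 0, so its term of the derivative tends to -\<infinity>, while
  every other term stays bounded above: it either converges (p0(x', y') > 0) or is p1(x', y') > 0
  times the logarithm of a conditional probability \<le> 1.\<close>

lemma le_marg: "(\<And>z. p z \<ge> 0) \<Longrightarrow> p (x, y) \<le> marg p x"
  unfolding marg_def by (rule member_le_sum) auto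

lemma marg_nonneg: "(\<And>z. p z \<ge> 0) \<Longrightarrow> marg p x \<ge> 0"
  unfolding marg_def by (simp add: sum_nonneg)

lemma marg_affine: "marg (\<lambda>z. a * p z + b * q z) x = a * marg p x + b * marg q x"
  unfolding marg_def by (simp add: sum.distrib sum_distrib_left)

lemma cond_pos: "(\<And>z. p z \<ge> 0) \<Longrightarrow> p (x, y) > 0 \<Longrightarrow> cond p y x > 0"
  using le_marg[of p x y] by (simp add: cond_def)

lemma cond_le_one: "(\<And>z. p z \<ge> 0) \<Longrightarrow> cond p y x \<le> 1"
  using le_marg[of p x y] marg_nonneg[of p x] by (auto simp: cond_def divide_le_eq_1)

lemma strongly_connected_out_edge:
  assumes "strongly_connected E"
  obtains y where "(x, y) \<in> E"
  using assms tranclD[of x x E] unfolding strongly_connected_def by blast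

lemma stationary_exit_edge:
  fixes p :: "'a::finite \<times> 'a \<Rightarrow> real"
  assumes "strongly_connected E"
    and nonneg: "\<And>z. p z \<ge> 0"
    and stationary: "\<And>x. (\<Sum>y\<in>UNIV. p (x, y)) = (\<Sum>y\<in>UNIV. p (y, x))"
    and support: "{z. p z > 0} \<subset> E"
    and nonzero: "p z0 > 0"
  shows "\<exists>x y. (x, y) \<in> E \<and> p (x, y) = 0 \<and> marg p x > 0"
proof (rule ccontr)
  assume no_exit: "\<not> ?thesis"
  have step: "marg p y > 0" if "marg p x > 0" "(x, y) \<in> E" for x y
  proof -
    have "0 < p (x, y)" using no_exit that nonneg[of "(x, y)"] by force
    also have "\<dots> \<le> (\<Sum>w\<in>UNIV. p (w, y))" by (rule member_le_sum) (auto simp: nonneg)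
    finally show ?thesis using stationary[of y] by (simp add: marg_def)
  qed
  have start: "marg p (fst z0) > 0"
    using le_marg[of p "fst z0" "snd z0"] nonneg nonzero by simp
  have "marg p x > 0" for x
  proof -
    have "(fst z0, x) \<in> E\<^sup>+"
      using \<open>strongly_connected E\<close> unfolding strongly_connected_def by blast
    then show ?thesis
      by (induction rule: trancl_induct) (use start step in blast)+
  qed
  then have "E \<subseteq> {z. p z > 0}"
    using no_exit nonneg by (force simp: less_le)
  with support show False by blast
qed

lemma G_eq_sum_mult_ln:
  "G E v0 p = (\<Sum>z\<in>E. p z * ln (p z / v0 (snd z) (fst z))) - (\<Sum>x\<in>UNIV. marg p x * ln (marg p x))"
proof -
  have "(if u = 0 then 0 else u * w) = u * w" for u w :: real by simp
  then show ?thesis unfolding G_def xlogx_def by (simp add: split_def)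
qed

lemma has_real_derivative_mult_ln:
  fixes u :: "real \<Rightarrow> real"
  assumes "(u has_real_derivative u') (at t)" "u t > 0" "c > 0"
  shows "((\<lambda>s. u s * ln (u s / c)) has_real_derivative u' * ln (u t / c) + u') (at t)"
  using assms by (auto intro!: derivative_eq_intros)

lemma has_real_derivative_xlnx:
  fixes u :: "real \<Rightarrow> real"
  assumes "(u has_real_derivative u') (at t)" "u t > 0"
  shows "((\<lambda>s. u s * ln (u s)) has_real_derivative u' * ln (u t) + u') (at t)"
  using has_real_derivative_mult_ln[OF assms zero_less_one] by simp

lemma sum_mult_fst_eq_sum_marg:
  fixes q :: "'a::finite \<times> 'a \<Rightarrow> real"
  assumes "\<And>z. z \<notin> E \<Longrightarrow> q z = 0"
  shows "(\<Sum>z\<in>E. q z * h (fst z)) = (\<Sum>x\<in>UNIV. marg q x * h x)"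
proof -
  have "(\<Sum>z\<in>E. q z * h (fst z)) = (\<Sum>z\<in>UNIV. q z * h (fst z))"
    by (rule sum.mono_neutral_left) (auto simp: assms)
  also have "\<dots> = (\<Sum>x\<in>UNIV. \<Sum>y\<in>UNIV. q (x, y) * h x)"
    by (simp add: sum.cartesian_product split_def flip: UNIV_Times_UNIV)
  finally show ?thesis
    by (simp add: marg_def sum_distrib_right)
qed

lemma has_real_derivative_G:
  fixes q :: "real \<Rightarrow> 'a::finite \<times> 'a \<Rightarrow> real"
  assumes deriv: "\<And>z. ((\<lambda>s. q s z) has_real_derivative q' z) (at t)"
    and q'_outside: "\<And>z. z \<notin> E \<Longrightarrow> q' z = 0"
    and q_pos: "\<And>z. z \<in> E \<Longrightarrow> q t z > 0"
    and marg_pos: "\<And>x. marg (q t) x > 0"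
    and v0_pos: "\<And>x y. (x, y) \<in> E \<Longrightarrow> v0 y x > 0"
  shows "((\<lambda>s. G E v0 (q s)) has_real_derivative
           (\<Sum>(x, y)\<in>E. q' (x, y) * ln (cond (q t) y x / v0 y x))) (at t)"
proof -
  have deriv_marg: "((\<lambda>s. marg (q s) x) has_real_derivative marg q' x) (at t)" for x
    unfolding marg_def by (intro DERIV_sum deriv)
  have "((\<lambda>s. G E v0 (q s)) has_real_derivative
      (\<Sum>z\<in>E. q' z * ln (q t z / v0 (snd z) (fst z)) + q' z)
      - (\<Sum>x\<in>UNIV. marg q' x * ln (marg (q t) x) + marg q' x)) (at t)"
    unfolding G_eq_sum_mult_ln
    using deriv q_pos v0_pos deriv_marg marg_pos
    by (intro DERIV_diff DERIV_sum has_real_derivative_mult_ln has_real_derivative_xlnx) auto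
  moreover have "(\<Sum>z\<in>E. q' z * ln (q t z / v0 (snd z) (fst z)) + q' z)
      - (\<Sum>x\<in>UNIV. marg q' x * ln (marg (q t) x) + marg q' x)
      = (\<Sum>z\<in>E. q' z * (ln (q t z / v0 (snd z) (fst z)) - ln (marg (q t) (fst z))))"
    using sum_mult_fst_eq_sum_marg[of E q' "\<lambda>x. ln (marg (q t) x)", OF q'_outside]
      sum_mult_fst_eq_sum_marg[of E q' "\<lambda>_. 1", OF q'_outside]
    by (simp add: sum.distrib sum_subtractf right_diff_distrib)
  moreover have "\<dots> = (\<Sum>(x, y)\<in>E. q' (x, y) * ln (cond (q t) y x / v0 y x))"
  proof (rule sum.cong)
    fix z assume "z \<in> E"
    then have "ln (q t z / v0 (snd z) (fst z) / marg (q t) (fst z))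
        = ln (q t z / v0 (snd z) (fst z)) - ln (marg (q t) (fst z))"
      using q_pos v0_pos[of "fst z" "snd z"] marg_pos by (intro ln_divide_pos) auto
    then show "q' z * (ln (q t z / v0 (snd z) (fst z)) - ln (marg (q t) (fst z)))
        = (case z of (x, y) \<Rightarrow> q' (x, y) * ln (cond (q t) y x / v0 y x))"
      by (simp add: cond_def split_def mult.commute)
  qed simp
  ultimately show ?thesis by simp
qed

lemma filterlim_sum_at_bot:
  fixes f :: "'b \<Rightarrow> 'c \<Rightarrow> real"
  assumes "finite A" "a \<in> A" "filterlim (f a) at_bot F"
    and bounded: "\<And>b. b \<in> A - {a} \<Longrightarrow> \<exists>M. eventually (\<lambda>x. f b x \<le> M) F"
  shows "filterlim (\<lambda>x. \<Sum>b\<in>A. f b x) at_bot F"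
proof -
  obtain M where M: "\<And>b. b \<in> A - {a} \<Longrightarrow> eventually (\<lambda>x. f b x \<le> M b) F"
    using bounded by metis
  have bounded_rest: "eventually (\<lambda>x. \<forall>b\<in>A - {a}. f b x \<le> M b) F"
    using \<open>finite A\<close> M by (simp add: eventually_ball_finite)
  have sum_split: "(\<Sum>b\<in>A. f b x) = f a x + (\<Sum>b\<in>A - {a}. f b x)" for x
    using assms(1,2) by (simp add: sum.remove)
  show ?thesis
    unfolding filterlim_at_bot
  proof
    fix Z
    have "eventually (\<lambda>x. f a x \<le> Z - (\<Sum>b\<in>A - {a}. M b)) F"
      using assms(3) by (simp add: filterlim_at_bot)
    with bounded_rest show "eventually (\<lambda>x. (\<Sum>b\<in>A. f b x) \<le> Z) F"
    proof eventually_elim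
      case (elim x)
      then have "(\<Sum>b\<in>A - {a}. f b x) \<le> (\<Sum>b\<in>A - {a}. M b)" by (intro sum_mono) auto
      with elim show ?case by (simp add: sum_split)
    qed
  qed
qed

lemma eventually_in_unit_interval: "eventually (\<lambda>t::real. t \<in> {0<..<1}) (at_right 0)"
  by (rule eventually_at_right_real) simp

lemma segment_nonneg:
  fixes t :: real
  shows "(\<And>z. p0 z \<ge> 0) \<Longrightarrow> (\<And>z. p1 z \<ge> 0) \<Longrightarrow> t \<in> {0<..<1} \<Longrightarrow> (1 - t) * p0 z + t * p1 z \<ge> 0"
  by (simp add: add_nonneg_nonneg)

lemma tendsto_cond_segment:
  assumes "marg p0 x > 0"
  shows "((\<lambda>t. cond (\<lambda>z. (1 - t) * p0 z + t * p1 z) y x) \<longlongrightarrow> cond p0 y x) (at_right 0)"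
proof -
  have "((\<lambda>t. ((1 - t) * p0 (x, y) + t * p1 (x, y)) / ((1 - t) * marg p0 x + t * marg p1 x))
      \<longlongrightarrow> ((1 - 0) * p0 (x, y) + 0 * p1 (x, y)) / ((1 - 0) * marg p0 x + 0 * marg p1 x))
      (at_right 0)"
    using assms by (intro tendsto_intros) auto
  then show ?thesis by (simp add: cond_def marg_affine)
qed

lemma filterlim_segment_term_at_bot:
  assumes nonneg: "\<And>z. p0 z \<ge> 0" "\<And>z. p1 z \<ge> 0"
    and "p0 (x, y) = 0" "marg p0 x > 0" "p1 (x, y) > 0" "v > 0"
  shows "filterlim (\<lambda>t. (p1 (x, y) - p0 (x, y)) * ln (cond (\<lambda>z. (1 - t) * p0 z + t * p1 z) y x / v))
           at_bot (at_right 0)"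
proof -
  have "cond p0 y x = 0" using assms(3) by (simp add: cond_def)
  then have "((\<lambda>t. cond (\<lambda>z. (1 - t) * p0 z + t * p1 z) y x / v) \<longlongrightarrow> 0 / v) (at_right 0)"
    using tendsto_cond_segment[of p0 x p1 y, OF \<open>marg p0 x > 0\<close>] \<open>v > 0\<close>
    by (intro tendsto_divide tendsto_const) auto
  moreover have "eventually (\<lambda>t. cond (\<lambda>z. (1 - t) * p0 z + t * p1 z) y x / v > 0) (at_right 0)"
    using eventually_in_unit_interval
  proof eventually_elim
    case (elim t)
    then show ?case using assms segment_nonneg[OF nonneg] by (intro divide_pos_pos cond_pos) auto
  qed
  ultimately have "filterlim (\<lambda>t. cond (\<lambda>z. (1 - t) * p0 z + t * p1 z) y x / v) (at_right 0) (at_right 0)"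
    by (simp add: tendsto_imp_filterlim_at_right)
  then have "filterlim (\<lambda>t. ln (cond (\<lambda>z. (1 - t) * p0 z + t * p1 z) y x / v)) at_bot (at_right 0)"
    by (rule filterlim_compose[OF ln_at_0])
  then show ?thesis
    using assms by (intro filterlim_tendsto_pos_mult_at_bot[OF tendsto_const]) auto
qed

lemma segment_term_bounded_above:
  assumes nonneg: "\<And>z. p0 z \<ge> 0" "\<And>z. p1 z \<ge> 0"
    and "p1 (x, y) > 0" "v > 0"
  shows "\<exists>M. eventually (\<lambda>t. (p1 (x, y) - p0 (x, y))
           * ln (cond (\<lambda>z. (1 - t) * p0 z + t * p1 z) y x / v) \<le> M) (at_right 0)"
proof (cases "p0 (x, y) = 0")
  case True
  have "eventually (\<lambda>t. (p1 (x, y) - p0 (x, y))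
      * ln (cond (\<lambda>z. (1 - t) * p0 z + t * p1 z) y x / v) \<le> p1 (x, y) * ln (1 / v)) (at_right 0)"
    using eventually_in_unit_interval
  proof eventually_elim
    case (elim t)
    let ?c = "cond (\<lambda>z. (1 - t) * p0 z + t * p1 z) y x"
    have "?c > 0"
      using elim assms True by (intro cond_pos segment_nonneg[OF nonneg]) auto
    moreover have "?c \<le> 1"
      using elim by (intro cond_le_one segment_nonneg[OF nonneg])
    ultimately have "ln (?c / v) \<le> ln (1 / v)"
      using \<open>v > 0\<close> by (simp add: divide_right_mono)
    then show ?case using True \<open>p1 (x, y) > 0\<close> by (simp add: mult_left_mono)
  qed
  then show ?thesis by blast
next
  case False
  then have "p0 (x, y) > 0" using nonneg(1)[of "(x, y)"] by simp
  then have "marg p0 x > 0" using le_marg[of p0 x y] nonneg by simp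
  have "((\<lambda>t. (p1 (x, y) - p0 (x, y)) * ln (cond (\<lambda>z. (1 - t) * p0 z + t * p1 z) y x / v))
      \<longlongrightarrow> (p1 (x, y) - p0 (x, y)) * ln (cond p0 y x / v)) (at_right 0)"
    using tendsto_cond_segment[OF \<open>marg p0 x > 0\<close>] False cond_pos[of p0] nonneg \<open>v > 0\<close>
    by (intro tendsto_intros) (auto simp: less_le)
  then show ?thesis
    by (blast dest: order_tendstoD(2)[OF _ less_add_one] intro: eventually_mono less_imp_le)
qed

lemma cl_Ps_vanishes_outside:
  assumes "p \<in> cl_Ps E" "z \<notin> E"
  shows "p z = 0"
proof -
  have "p z \<ge> 0" "\<not> p z > 0" using assms unfolding cl_Ps_def by blast+
  then show ?thesis by simp
qed

lemma Ps_marg_pos: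
  assumes "strongly_connected E" "p \<in> Ps E"
  shows "marg p x > 0"
proof -
  obtain y where "(x, y) \<in> E" using strongly_connected_out_edge[OF assms(1)] .
  then show ?thesis
    using assms(2) le_marg[of p x y] unfolding Ps_def cl_Ps_def by force
qed

lemma has_real_derivative_G_segment:
  assumes "strongly_connected E" "p0 \<in> cl_Ps E" "p1 \<in> Ps E" "t \<in> {0<..<1}"
    and v0_pos: "\<And>x y. (x, y) \<in> E \<Longrightarrow> v0 y x > 0"
  shows "((\<lambda>s. G E v0 (\<lambda>z. (1 - s) * p0 z + s * p1 z)) has_real_derivative
           (\<Sum>(x, y)\<in>E. (p1 (x, y) - p0 (x, y))
              * ln (cond (\<lambda>z. (1 - t) * p0 z + t * p1 z) y x / v0 y x))) (at t)"
proof (rule has_real_derivative_G)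
  have p0_nonneg: "\<And>z. p0 z \<ge> 0" using assms(2) unfolding cl_Ps_def by auto
  show "((\<lambda>s. (1 - s) * p0 z + s * p1 z) has_real_derivative p1 z - p0 z) (at t)" for z
    by (auto intro!: derivative_eq_intros)
  show "p1 z - p0 z = 0" if "z \<notin> E" for z
  proof -
    have "p1 \<in> cl_Ps E" using assms(3) unfolding Ps_def by blast
    then show ?thesis
      using cl_Ps_vanishes_outside[OF assms(2) that] cl_Ps_vanishes_outside[OF _ that] by simp
  qed
  show "(1 - t) * p0 z + t * p1 z > 0" if "z \<in> E" for z
    using that assms(3,4) p0_nonneg[of z] unfolding Ps_def by (auto intro!: add_nonneg_pos)
  show "marg (\<lambda>z. (1 - t) * p0 z + t * p1 z) x > 0" for x
    using assms(4) Ps_marg_pos[OF assms(1,3)] marg_nonneg[of p0 x, OF p0_nonneg]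
    unfolding marg_affine by (auto intro!: add_nonneg_pos)
qed (use v0_pos in auto)

theorem mainTheorem6:
  fixes E :: "('a::finite \<times> 'a) set" and v0 :: "'a \<Rightarrow> 'a \<Rightarrow> real"
    and p0 p1 :: "'a \<times> 'a \<Rightarrow> real"
  assumes "strongly_connected E"
    and "v0 \<in> kernels_W E"
    and "p0 \<in> bdry_Ps E"
    and "p1 \<in> Ps E"
  defines "pt \<equiv> (\<lambda>t::real. \<lambda>z. (1 - t) * p0 z + t * p1 z)"
  shows "(\<forall>t\<in>{0<..<1}. ((\<lambda>s. G E v0 (pt s)) has_real_derivative
            (\<Sum>(x, y)\<in>E. (p1 (x, y) - p0 (x, y)) * ln (cond (pt t) y x / v0 y x))) (at t))
      \<and> filterlim (\<lambda>t. \<Sum>(x, y)\<in>E. (p1 (x, y) - p0 (x, y)) * ln (cond (pt t) y x / v0 y x))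
            at_bot (at_right 0)
      \<and> (\<exists>(x, y)\<in>E. p0 (x, y) = 0 \<and> ((\<lambda>t. cond (pt t) y x) \<longlongrightarrow> 0) (at_right 0))"
proof -
  have p0_closure: "p0 \<in> cl_Ps E" and p0_nonneg: "\<And>z. p0 z \<ge> 0"
    and p0_stationary: "\<And>x. (\<Sum>y\<in>UNIV. p0 (x, y)) = (\<Sum>y\<in>UNIV. p0 (y, x))"
    and p0_support: "{z. p0 z > 0} \<subset> E" and p0_sum: "(\<Sum>z\<in>UNIV. p0 z) = 1"
    using assms(3) unfolding bdry_Ps_def cl_Ps_def Ps_def by auto
  have p1_nonneg: "\<And>z. p1 z \<ge> 0" and p1_support: "{z. p1 z > 0} = E"
    using assms(4) unfolding Ps_def cl_Ps_def by auto
  have v0_pos: "\<And>x y. (x, y) \<in> E \<Longrightarrow> v0 y x > 0"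
    using assms(2) unfolding kernels_W_def by auto
  obtain z0 where "p0 z0 > 0"
    using p0_sum p0_nonneg by (metis less_eq_real_def sum.neutral zero_neq_one)
  then obtain x y where exit_edge: "(x, y) \<in> E" "p0 (x, y) = 0" "marg p0 x > 0"
    using stationary_exit_edge[OF assms(1) p0_nonneg p0_stationary p0_support] by blast
  have "\<forall>t\<in>{0<..<1}. ((\<lambda>s. G E v0 (pt s)) has_real_derivative
      (\<Sum>(x, y)\<in>E. (p1 (x, y) - p0 (x, y)) * ln (cond (pt t) y x / v0 y x))) (at t)"
    unfolding pt_def
    by (intro ballI has_real_derivative_G_segment[OF assms(1) p0_closure assms(4)]) (auto intro: v0_pos)
  moreover have "filterlim (\<lambda>t. \<Sum>(x, y)\<in>E. (p1 (x, y) - p0 (x, y)) * ln (cond (pt t) y x / v0 y x))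
      at_bot (at_right 0)"
    unfolding pt_def split_def
    using exit_edge p1_support v0_pos
    by (intro filterlim_sum_at_bot[where a = "(x, y)"] filterlim_segment_term_at_bot
        segment_term_bounded_above p0_nonneg p1_nonneg) auto
  moreover have "((\<lambda>t. cond (pt t) y x) \<longlongrightarrow> 0) (at_right 0)"
    using tendsto_cond_segment[of p0 x p1 y] exit_edge unfolding pt_def by (simp add: cond_def)
  ultimately show ?thesis using exit_edge by blast
qed

end
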